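(* Let $C$ be the middle-thirds Cantor set and for $n\in\mathbb{N}$ let $S_n:=\{p/q\in C:\gcd(p,q)=1,\ 3^{n-1}\le q<3^n\}$ and, for $K<\infty$, $S_n^{(K)}:=\{p/q\in S_n: P(p/q)\le K\log q\}$. Suppose there exists $K<\infty$ such that for every $\varepsilon_1>0$, $\#(S_n\setminus S_n^{(K)})=O(2^{n(1+\varepsilon_1)})$. Then for every $\varepsilon_1>0$, $\#(S_n)=O(2^{n(1+\varepsilon_1)})$.
   Context: $C=\{x\in[0,1]: x=\sum_{i\ge1}a_i3^{-i}\text{ with all }a_i\in\{0,2\}\}$. For a rational number $p/q$, its period $P(p/q)$ is the (minimal) period of the eventually periodic part of its ternary expansion. $\log$ is the natural logarithm. *)

theory Defs
  imports "HOL-Analysis.Analysis" "HOL-Library.Landau_Symbols"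
begin

definition cantor_set :: "real set" where
  "cantor_set = {x. 0 \<le> x \<and> x \<le> 1 \<and>
     (\<exists>a :: nat \<Rightarrow> nat. (\<forall>i. a i \<in> {0, 2}) \<and> (\<lambda>i. real (a i) / 3 ^ Suc i) sums x)}"

text \<open>The i-th ternary digit (i >= 1) of x, greedy (terminating) expansion.\<close>
definition tdigit :: "real \<Rightarrow> nat \<Rightarrow> int" where
  "tdigit x i = \<lfloor>3 ^ i * x\<rfloor> mod 3"

definition tperiod :: "real \<Rightarrow> nat" where
  "tperiod x = (LEAST k. k > 0 \<and> (\<exists>N. \<forall>i\<ge>N. tdigit x (i + k) = tdigit x i))"

definition S :: "nat \<Rightarrow> (nat \<times> nat) set" where
  "S n = {(p, q). coprime p q \<and> real p / real q \<in> cantor_set \<and> 3 ^ (n - 1) \<le> q \<and> q < 3 ^ n}"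

definition SK :: "real \<Rightarrow> nat \<Rightarrow> (nat \<times> nat) set" where
  "SK K n = {(p, q) \<in> S n. real (tperiod (real p / real q)) \<le> K * ln (real q)}"

end

theory Submission
  imports Defs "HOL-Computational_Algebra.Primes" "HOL-Real_Asymp.Real_Asymp"
begin

(* Proof of Corollary 5.3: if #(S_n \ S_n^(K)) = O(2^(n(1+e))) for every e > 0, then
   #S_n = O(2^(n(1+e))) for every e > 0.  Since S_n is the disjoint union of S_n^(K) and
   its complement, it suffices to show unconditionally that #S_n^(K) = O(2^(n(1+e))).

   The argument for S_n^(K):
   (1) If p/q is in lowest terms with q < 3^n and its ternary expansion has period P,
       then q divides 3^n (3^P - 1) (the fractional parts of 3^N p/q and 3^(N+P) p/q
       agree once the digits are periodic, and the 3-part of q is below 3^n).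
   (2) For a fixed denominator q < 3^n at most 2^n numerators p give p/q in the Cantor
       set: distinct such p/q are 1/q > 3^(-n) apart, but each lies within 3^(-n) of
       one of the 2^n ternary sums with n digits in {0,2}.
   (3) For p/q in S_n^(K) the period is at most K log q < |K| n log 3, so by (1) and (2)
       #S_n^(K) <= 2^n * sum over P <= |K| n log 3 of d(3^n (3^P - 1)), where d counts
       divisors.  The divisor bound d(N) = O(N^delta) makes each term O(2^(e n/2)). *)

text \<open>Multiplying M by p^a, p a prime not dividing M, multiplies the number of
  divisors by at most a + 1: every divisor of p^a M is p^i e with i \<le> a and e | M.\<close>
lemma card_divisors_prime_power_mult:
  fixes p M a :: nat
  assumes p: "prime p" and M: "M > 0" and p_ndvd: "\<not> p dvd M"
  shows "card {d. d dvd p ^ a * M} \<le> Suc a * card {d. d dvd M}"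
proof -
  let ?split = "\<lambda>(i, e). p ^ i * e"
  have "{d. d dvd p ^ a * M} \<subseteq> ?split ` ({..a} \<times> {e. e dvd M})"
  proof
    fix d assume "d \<in> {d. d dvd p ^ a * M}"
    hence d: "d dvd p ^ a * M" by simp
    have "d \<noteq> 0" using d M p by (cases "d = 0") (auto dest: prime_gt_0_nat)
    then obtain e where de: "d = p ^ multiplicity p d * e" and e: "\<not> p dvd e"
      using multiplicity_decompose'[of d p] p by (metis not_prime_unit)
    define m where "m = multiplicity p d"
    have "coprime e (p ^ a)" using prime_imp_coprime[OF p e] by (simp add: coprime_commute)
    moreover have "e dvd p ^ a * M" using d de by (metis dvd_mult_right)
    ultimately have "e dvd M" by (simp add: coprime_dvd_mult_right_iff)
    have "coprime (p ^ m) M" using prime_imp_coprime[OF p p_ndvd] by simp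
    moreover have "p ^ m dvd p ^ a * M" using d de m_def by (metis dvd_mult_left)
    ultimately have "p ^ m dvd p ^ a" by (simp add: coprime_dvd_mult_left_iff)
    hence "m \<le> a" using prime_gt_1_nat[OF p] by (rule power_dvd_imp_le)
    with \<open>e dvd M\<close> de m_def show "d \<in> ?split ` ({..a} \<times> {e. e dvd M})"
      by (intro rev_image_eqI[of "(m, e)"]) auto
  qed
  moreover have "finite ({..a} \<times> {e. e dvd M})" using M by simp
  ultimately have "card {d. d dvd p ^ a * M} \<le> card ({..a} \<times> {e. e dvd M})"
    by (meson card_image_le card_mono finite_imageI order_trans)
  thus ?thesis by (simp add: card_cartesian_product)
qed

lemma Suc_le_const_two_powr:
  fixes \<delta> :: real assumes "\<delta> > 0"
  shows "real (Suc a) \<le> max 1 (1 / (\<delta> * ln 2)) * 2 powr (real a * \<delta>)"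
proof -
  have exp_bound: "1 + real a * \<delta> * ln 2 \<le> 2 powr (real a * \<delta>)"
    using exp_ge_add_one_self[of "real a * \<delta> * ln 2"] by (simp add: powr_def mult.commute)
  have pos: "\<delta> * ln 2 > 0" using assms by simp
  show ?thesis
  proof (cases "\<delta> * ln 2 \<ge> 1")
    case True
    have "real a \<le> real a * (\<delta> * ln 2)" using True by (simp add: mult_le_cancel_left1)
    hence "real (Suc a) \<le> 2 powr (real a * \<delta>)" using exp_bound by (simp add: algebra_simps)
    thus ?thesis by (smt (verit) max.cobounded1 mult_le_cancel_right1 powr_ge_zero)
  next
    case False
    have "real (Suc a) \<le> (1 / (\<delta> * ln 2)) * (1 + real a * \<delta> * ln 2)"
      using False pos by (simp add: field_simps)
    also have "\<dots> \<le> (1 / (\<delta> * ln 2)) * 2 powr (real a * \<delta>)"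
      using exp_bound pos by (intro mult_left_mono) auto
    also have "\<dots> \<le> max 1 (1 / (\<delta> * ln 2)) * 2 powr (real a * \<delta>)"
      by (intro mult_right_mono) auto
    finally show ?thesis .
  qed
qed

lemma Suc_le_powr_large_base:
  fixes b \<delta> :: real assumes b: "b > 0" and large: "b powr \<delta> \<ge> 2"
  shows "real (Suc a) \<le> b powr (real a * \<delta>)"
proof -
  have "real (Suc a) \<le> 2 ^ a"
    using Suc_leI[OF less_exp[of a]] by (metis of_nat_le_iff of_nat_numeral of_nat_power)
  also have "\<dots> \<le> (b powr \<delta>) ^ a" using large by (intro power_mono) auto
  also have "\<dots> = b powr (real a * \<delta>)"
    using b by (simp add: powr_realpow[symmetric] powr_powr mult.commute)
  finally show ?thesis .
qed

text \<open>The factor a + 1 contributed by a prime power p^a is at most p^(a\<delta>), up to the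
  constant c for the finitely many primes p < 2^(1/\<delta>).\<close>
lemma Suc_le_prime_powr:
  fixes \<delta> :: real and p a :: nat
  assumes \<delta>: "\<delta> > 0" and p: "prime p"
  shows "real (Suc a) \<le> (if real p < 2 powr (1 / \<delta>) then max 1 (1 / (\<delta> * ln 2)) else 1)
                          * real p powr (real a * \<delta>)"
proof (cases "real p < 2 powr (1 / \<delta>)")
  case True
  have "real (Suc a) \<le> max 1 (1 / (\<delta> * ln 2)) * 2 powr (real a * \<delta>)"
    by (rule Suc_le_const_two_powr[OF \<delta>])
  also have "\<dots> \<le> max 1 (1 / (\<delta> * ln 2)) * real p powr (real a * \<delta>)"
    using prime_ge_2_nat[OF p] \<delta> by (intro mult_left_mono powr_mono2) auto
  finally show ?thesis using True by simp
next
  case False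
  have "2 = (2 powr (1 / \<delta>)) powr \<delta>" using \<delta> by (simp add: powr_powr)
  also have "\<dots> \<le> real p powr \<delta>" using False \<delta> by (intro powr_mono2) auto
  finally show ?thesis using Suc_le_powr_large_base[of "real p"] prime_gt_0_nat[OF p] False by simp
qed

lemma powr_nat_power_mult:
  fixes b a M :: nat and \<delta> :: real
  assumes "b > 0"
  shows "real (b ^ a * M) powr \<delta> = real b powr (real a * \<delta>) * real M powr \<delta>"
proof -
  have "real (b ^ a * M) powr \<delta> = (real b powr real a) powr \<delta> * real M powr \<delta>"
    using assms by (simp add: powr_mult powr_realpow)
  thus ?thesis by (simp add: powr_powr)
qed

lemma split_off_prime_power:
  fixes N :: nat assumes "N > 1"
  obtains p a M where "prime p" "a \<ge> 1" "\<not> p dvd M" "N = p ^ a * M" "0 < M" "M < N"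
proof -
  obtain p where p: "prime p" "p dvd N" using assms prime_factor_nat[of N] by auto
  have N0: "N \<noteq> 0" and np: "\<not> is_unit p" using assms p(1) by (auto simp: not_prime_unit)
  define a where "a = multiplicity p N"
  obtain M where NM: "N = p ^ a * M" and nd: "\<not> p dvd M"
    using multiplicity_decompose'[OF N0 np] unfolding a_def by blast
  have a1: "a \<ge> 1" using multiplicity_gt_zero_iff[OF N0 np] p(2) unfolding a_def by simp
  have M0: "M > 0" using NM N0 by (cases M) auto
  have "2 \<le> p ^ a" using prime_ge_2_nat[OF p(1)] a1
    by (metis power_increasing[of 1 a p] power_one_right le_trans one_le_numeral)
  hence "M < N" using NM M0 by (metis less_le_trans mult_le_mono1 mult_2 less_add_same_cancel1)
  with p(1) a1 nd NM M0 show ?thesis using that by blast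
qed

text \<open>The divisor bound d(N) \<le> C_\<delta> N^\<delta>: each prime power p^a exactly dividing N
  contributes a factor a + 1 to d(N), which is at most p^(a\<delta>) once p^\<delta> \<ge> 2 and at most
  c p^(a\<delta>) for the finitely many smaller primes.\<close>
lemma divisor_count_le_small_primes:
  fixes \<delta> :: real and N :: nat
  assumes \<delta>: "\<delta> > 0" and N: "N > 0"
  defines "c \<equiv> max 1 (1 / (\<delta> * ln 2))" and "B \<equiv> 2 powr (1 / \<delta>)"
  shows "real (card {d. d dvd N})
           \<le> c ^ card {p. prime p \<and> p dvd N \<and> real p < B} * real N powr \<delta>"
  using N
proof (induction N rule: less_induct)
  case (less N)
  define s where "s N = {p. prime p \<and> p dvd N \<and> real p < B}" for N :: nat
  have c1: "c \<ge> 1" by (simp add: c_def)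
  show ?case
  proof (cases "N = 1")
    case True
    then show ?thesis using c1 by simp
  next
    case False
    with less.prems have "N > 1" by simp
    then obtain p a M where p: "prime p" and a: "a \<ge> 1" and nd: "\<not> p dvd M"
      and NM: "N = p ^ a * M" and M: "0 < M" "M < N"
      by (rule split_off_prime_power)
    have "s N \<subseteq> {..N}" using less.prems by (auto simp: s_def intro: dvd_imp_le)
    hence finN: "finite (s N)" by (rule finite_subset) simp
    have pN: "p dvd N" unfolding NM using a by (simp add: dvd_power)
    have sMN: "s M \<subseteq> s N" unfolding s_def NM by (auto intro: dvd_mult)
    define w where "w = (if real p < B then c else 1)"
    have factor: "real (Suc a) \<le> w * real p powr (real a * \<delta>)"
      using Suc_le_prime_powr[OF \<delta> p] unfolding w_def c_def B_def .
    have weight: "w * c ^ card (s M) \<le> c ^ card (s N)"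
    proof (cases "real p < B")
      case True
      have "card (insert p (s M)) \<le> card (s N)"
        using True p pN sMN finN by (intro card_mono) (auto simp: s_def)
      moreover have "card (insert p (s M)) = Suc (card (s M))"
        using nd finite_subset[OF sMN finN] by (simp add: s_def)
      ultimately have "Suc (card (s M)) \<le> card (s N)" by simp
      hence "c ^ Suc (card (s M)) \<le> c ^ card (s N)" using c1 by (rule power_increasing)
      thus ?thesis using True by (simp add: w_def)
    next
      case False
      have "c ^ card (s M) \<le> c ^ card (s N)"
        using card_mono[OF finN sMN] c1 by (rule power_increasing)
      thus ?thesis using False by (simp add: w_def)
    qed
    have "card {d. d dvd N} \<le> Suc a * card {d. d dvd M}"
      unfolding NM by (rule card_divisors_prime_power_mult[OF p M(1) nd])
    hence "real (card {d. d dvd N}) \<le> real (Suc a) * real (card {d. d dvd M})"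
      by (metis of_nat_mono of_nat_mult)
    also have "\<dots> \<le> (w * real p powr (real a * \<delta>)) * (c ^ card (s M) * real M powr \<delta>)"
      using factor less.IH[OF M(2) M(1)] by (intro mult_mono) (auto simp: s_def)
    also have "\<dots> = (w * c ^ card (s M)) * real N powr \<delta>"
      unfolding NM powr_nat_power_mult[OF prime_gt_0_nat[OF p]] by (simp add: mult_ac)
    also have "\<dots> \<le> c ^ card (s N) * real N powr \<delta>"
      using weight by (intro mult_right_mono) auto
    finally show ?thesis by (simp add: s_def)
  qed
qed

lemma divisor_bound:
  fixes \<delta> :: real assumes \<delta>: "\<delta> > 0"
  obtains C where "C > 0" "\<And>N. N > 0 \<Longrightarrow> real (card {d. d dvd N}) \<le> C * real N powr \<delta>"
proof
  define c where "c = max 1 (1 / (\<delta> * ln 2))"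
  define B where "B = (2::real) powr (1 / \<delta>)"
  define k where "k = nat \<lceil>B\<rceil>"
  show "c ^ k > 0" by (simp add: c_def)
  fix N :: nat assume N: "N > 0"
  have "{p. prime p \<and> p dvd N \<and> real p < B} \<subseteq> {..<k}"
    unfolding k_def by (auto dest: order.strict_trans2[OF _ le_of_int_ceiling])
  hence "card {p. prime p \<and> p dvd N \<and> real p < B} \<le> k"
    by (metis card_lessThan card_mono finite_lessThan)
  hence "c ^ card {p. prime p \<and> p dvd N \<and> real p < B} \<le> c ^ k"
    by (intro power_increasing) (auto simp: c_def)
  thus "real (card {d. d dvd N}) \<le> c ^ k * real N powr \<delta>"
    using divisor_count_le_small_primes[OF \<delta> N] unfolding c_def B_def
    by (meson mult_right_mono order_trans powr_ge_zero)
qed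

lemma floor_three_mult:
  fixes y :: real
  shows "\<lfloor>3 * y\<rfloor> = 3 * \<lfloor>y\<rfloor> + \<lfloor>3 * frac y\<rfloor>"
    and "0 \<le> \<lfloor>3 * frac y\<rfloor>" and "\<lfloor>3 * frac y\<rfloor> < 3"
proof -
  have "3 * y = 3 * frac y + of_int (3 * \<lfloor>y\<rfloor>)" by (simp add: frac_def algebra_simps)
  hence "\<lfloor>3 * y\<rfloor> = \<lfloor>3 * frac y + of_int (3 * \<lfloor>y\<rfloor>)\<rfloor>" by simp
  also have "\<dots> = \<lfloor>3 * frac y\<rfloor> + 3 * \<lfloor>y\<rfloor>" by (rule floor_add_int[symmetric])
  finally show "\<lfloor>3 * y\<rfloor> = 3 * \<lfloor>y\<rfloor> + \<lfloor>3 * frac y\<rfloor>" by simp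
  have "0 \<le> frac y" "frac y < 1" by (auto simp: frac_lt_1)
  thus "0 \<le> \<lfloor>3 * frac y\<rfloor>" "\<lfloor>3 * frac y\<rfloor> < 3" by linarith+
qed

lemma tdigit_Suc: "tdigit x (Suc k) = \<lfloor>3 * frac (3 ^ k * x)\<rfloor>"
proof -
  have "tdigit x (Suc k) = (3 * \<lfloor>3 ^ k * x\<rfloor> + \<lfloor>3 * frac (3 ^ k * x)\<rfloor>) mod 3"
    by (simp only: tdigit_def power_Suc mult.assoc floor_three_mult(1)[of "3 ^ k * x"])
  thus ?thesis using floor_three_mult(2,3)[of "3 ^ k * x"] by simp
qed

lemma frac_three_pow_Suc:
  "frac (3 ^ Suc k * x) = 3 * frac (3 ^ k * x) - of_int (tdigit x (Suc k))"
proof -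
  have "frac (3 ^ Suc k * x) = 3 * (3 ^ k * x) - of_int \<lfloor>3 * (3 ^ k * x)\<rfloor>"
    by (simp add: frac_def mult.assoc)
  also have "\<dots> = 3 * frac (3 ^ k * x) - of_int \<lfloor>3 * frac (3 ^ k * x)\<rfloor>"
    by (simp only: floor_three_mult(1)[of "3 ^ k * x"]) (simp add: frac_def algebra_simps)
  finally show ?thesis by (simp only: tdigit_Suc)
qed

text \<open>If the digits repeat with period P from position N on, then 3^N x and
  3^(N+P) x have the same fractional part: their difference is multiplied by 3 at
  every step yet stays in (-1,1).\<close>
lemma periodic_digits_imp_frac_eq:
  assumes per: "\<forall>i\<ge>N. tdigit x (i + P) = tdigit x i"
  shows "frac (3 ^ N * x) = frac (3 ^ (N + P) * x)"
proof -
  define \<Delta> where "\<Delta> = frac (3 ^ N * x) - frac (3 ^ (N + P) * x)"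
  have grow: "frac (3 ^ (N + j) * x) - frac (3 ^ (N + P + j) * x) = 3 ^ j * \<Delta>" for j
  proof (induction j)
    case 0 show ?case by (simp add: \<Delta>_def)
  next
    case (Suc j)
    have "tdigit x (Suc (N + P + j)) = tdigit x (Suc (N + j))"
      using per[rule_format, of "Suc (N + j)"] by (simp add: add_ac)
    hence "frac (3 ^ Suc (N + j) * x) - frac (3 ^ Suc (N + P + j) * x)
        = 3 * (frac (3 ^ (N + j) * x) - frac (3 ^ (N + P + j) * x))"
      by (simp only: frac_three_pow_Suc) (simp add: algebra_simps)
    thus ?case using Suc.IH by simp
  qed
  have bounded: "\<bar>3 ^ j * \<Delta>\<bar> < 1" for j
    using grow[of j] frac_lt_1[of "3 ^ (N + j) * x"] frac_lt_1[of "3 ^ (N + P + j) * x"]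
      frac_ge_0[of "3 ^ (N + j) * x"] frac_ge_0[of "3 ^ (N + P + j) * x"] by linarith
  have "\<Delta> = 0"
  proof (rule ccontr)
    assume "\<Delta> \<noteq> 0"
    then obtain j :: nat where "1 / \<bar>\<Delta>\<bar> < 3 ^ j" using real_arch_pow[of 3 "1 / \<bar>\<Delta>\<bar>"] by auto
    hence "1 < \<bar>3 ^ j * \<Delta>\<bar>" using \<open>\<Delta> \<noteq> 0\<close> by (simp add: field_simps abs_mult)
    thus False using bounded[of j] by linarith
  qed
  thus ?thesis by (simp add: \<Delta>_def)
qed

lemma frac_eq_imp_denom_dvd:
  fixes p q N P :: nat
  assumes q: "q > 0" and cop: "coprime p q"
    and eq: "frac (3 ^ N * (real p / real q)) = frac (3 ^ (N + P) * (real p / real q))"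
  shows "q dvd 3 ^ N * (3 ^ P - 1)"
proof -
  define x where "x = real p / real q"
  define z where "z = \<lfloor>3 ^ (N + P) * x\<rfloor> - \<lfloor>3 ^ N * x\<rfloor>"
  have "3 ^ (N + P) * x - 3 ^ N * x = of_int z"
    using eq unfolding z_def x_def frac_def by simp
  hence "real (3 ^ N * (3 ^ P - 1)) * x = of_int z"
    by (simp add: of_nat_diff power_add algebra_simps)
  hence "real (3 ^ N * (3 ^ P - 1) * p) = of_int z * real q"
    using q unfolding x_def by (simp add: field_simps)
  hence "int (3 ^ N * (3 ^ P - 1) * p) = z * int q"
    by (metis of_int_eq_iff of_int_of_nat_eq of_int_mult)
  hence "q dvd 3 ^ N * (3 ^ P - 1) * p" by (metis dvd_triv_right int_dvd_int_iff)
  thus ?thesis using cop by (simp add: coprime_commute coprime_dvd_mult_left_iff)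
qed

text \<open>Pigeonhole: the q+1 numbers q frac(3^k p/q), 0 \<le> k \<le> q, are integers in [0,q),
  so two fractional parts of the orbit coincide.\<close>
lemma frac_orbit_repeats:
  fixes p q :: nat
  assumes q: "q > 0"
  obtains a b where "a < b" "frac (3 ^ a * (real p / real q)) = frac (3 ^ b * (real p / real q))"
proof -
  define f where "f k = frac (3 ^ k * (real p / real q))" for k
  define g where "g k = \<lfloor>real q * f k\<rfloor>" for k
  have qf: "real q * f k = of_int (g k)" for k
  proof -
    have "real q * f k = of_int (int (3 ^ k * p) - int q * \<lfloor>3 ^ k * (real p / real q)\<rfloor>)"
      using q by (simp add: f_def frac_def algebra_simps)
    thus ?thesis unfolding g_def by (metis floor_of_int)
  qed
  have "g k \<in> {0..<int q}" for k
  proof -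
    have "0 \<le> real q * f k" "real q * f k < real q"
      using q frac_lt_1 by (auto simp: f_def)
    thus ?thesis using qf[of k] by simp
  qed
  hence "card (g ` {0..q}) \<le> card {0..<int q}" by (intro card_mono) auto
  hence "\<not> inj_on g {0..q}" using card_image by fastforce
  then obtain a b where ab: "a \<noteq> b" "g a = g b" unfolding inj_on_def by blast
  have "f a = f b" using qf[of a] qf[of b] ab(2) q
    by (metis mult_cancel_left of_nat_0_less_iff less_irrefl)
  with ab(1) show ?thesis using that unfolding f_def by (metis linorder_neqE_nat)
qed

lemma tdigit_eventually_periodic:
  fixes p q :: nat
  assumes q: "q > 0"
  shows "\<exists>k>0. \<exists>N. \<forall>i\<ge>N. tdigit (real p / real q) (i + k) = tdigit (real p / real q) i"
proof -
  define x where "x = real p / real q"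
  define f where "f k = frac (3 ^ k * x)" for k
  obtain a b where ab: "a < b" "f a = f b" using frac_orbit_repeats[OF q] unfolding f_def x_def by blast
  have f_Suc: "f (Suc k) = frac (3 * f k)" for k
    unfolding f_def frac_three_pow_Suc tdigit_Suc by (simp add: frac_def)
  have shift: "f (a + j) = f (b + j)" for j
    by (induction j) (simp_all add: ab(2) f_Suc)
  have "tdigit x (i + (b - a)) = tdigit x i" if "i \<ge> Suc a" for i
  proof -
    obtain j where i: "i = Suc (a + j)" using \<open>i \<ge> Suc a\<close> by (metis add_Suc le_iff_add)
    hence "i + (b - a) = Suc (b + j)" using ab by simp
    hence "tdigit x (i + (b - a)) = \<lfloor>3 * f (b + j)\<rfloor>" by (simp only: tdigit_Suc f_def)
    also have "\<dots> = \<lfloor>3 * f (a + j)\<rfloor>" by (simp only: shift)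
    also have "\<dots> = tdigit x i" using i by (simp only: tdigit_Suc f_def)
    finally show ?thesis .
  qed
  thus ?thesis using ab unfolding x_def by (intro exI[of _ "b - a"]) auto
qed

lemma tperiod_spec:
  fixes p q :: nat
  assumes q: "q > 0"
  shows "tperiod (real p / real q) > 0"
    and "\<exists>N. \<forall>i\<ge>N. tdigit (real p / real q) (i + tperiod (real p / real q))
                    = tdigit (real p / real q) i"
  using LeastI_ex[OF tdigit_eventually_periodic[OF q, of p]] unfolding tperiod_def by blast+

text \<open>A number q < r^n dividing r^N m (r prime) already divides r^n m: the r-part
  of q is a power of r below r^n.\<close>
lemma dvd_prime_power_mult_reduce:
  fixes r q m N n :: nat
  assumes r: "prime r" and q: "q > 0" and dvd: "q dvd r ^ N * m" and qn: "q < r ^ n"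
  shows "q dvd r ^ n * m"
proof -
  have "q dvd gcd (r ^ N * m) (q * m)" using dvd by simp
  also have "gcd (r ^ N * m) (q * m) = gcd (r ^ N) q * m"
    by (simp add: gcd_mult_right gcd.commute)
  finally have q_dvd: "q dvd gcd (r ^ N) q * m" .
  obtain i where i: "gcd (r ^ N) q = r ^ i"
    using divides_primepow_nat[OF r, of "gcd (r ^ N) q" N] by auto
  have "r ^ i \<le> q" using gcd_le2_nat[of q "r ^ N"] q i by simp
  hence "r ^ i < r ^ n" using qn by (rule le_less_trans)
  hence "i < n" using prime_gt_1_nat[OF r] by (metis power_less_imp_less_exp)
  hence "r ^ i * m dvd r ^ n * m" by (intro mult_dvd_mono le_imp_power_dvd) auto
  with q_dvd i show ?thesis by (metis dvd_trans)
qed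

lemma denom_dvd_period_number:
  fixes p q n :: nat
  assumes q: "q > 0" and cop: "coprime p q" and qn: "q < 3 ^ n"
  shows "q dvd 3 ^ n * (3 ^ tperiod (real p / real q) - 1)"
proof -
  have three: "prime (3::nat)" by simp
  obtain N where "\<forall>i\<ge>N. tdigit (real p / real q) (i + tperiod (real p / real q))
                        = tdigit (real p / real q) i"
    using tperiod_spec(2)[OF q] by blast
  from frac_eq_imp_denom_dvd[OF q cop periodic_digits_imp_frac_eq[OF this]]
  show ?thesis by (rule dvd_prime_power_mult_reduce[OF three q _ qn])
qed

lemma cantor_set_prefix:
  assumes "x \<in> cantor_set"
  obtains xs where "length xs = n" "set xs \<subseteq> {0, 2::nat}"
    "(\<Sum>i<n. real (xs ! i) / 3 ^ Suc i) \<le> x" "x \<le> (\<Sum>i<n. real (xs ! i) / 3 ^ Suc i) + 1 / 3 ^ n"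
proof -
  obtain a :: "nat \<Rightarrow> nat" where a: "\<forall>i. a i \<in> {0, 2}"
    and s: "(\<lambda>i. real (a i) / 3 ^ Suc i) sums x"
    using assms unfolding cantor_set_def by blast
  define f where "f i = real (a i) / 3 ^ Suc i" for i
  define xs where "xs = map a [0..<n]"
  have sum_xs: "(\<Sum>i<n. real (xs ! i) / 3 ^ Suc i) = sum f {..<n}"
    unfolding xs_def f_def by (intro sum.cong) auto
  have tail: "(\<lambda>i. f (i + n)) sums (x - sum f {..<n})"
    using s unfolding f_def[symmetric] by (simp add: sums_iff_shift)
  have geom: "(\<lambda>i. 2 / 3 ^ Suc (i + n)) sums (1 / 3 ^ n :: real)"
  proof -
    have "(\<lambda>i. (2 / 3 ^ Suc n) * (1/3) ^ i) sums ((2 / 3 ^ Suc n) * (1 / (1 - 1/3)) :: real)"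
      by (intro sums_mult geometric_sums) simp
    moreover have "(\<lambda>i. (2 / 3 ^ Suc n) * (1/3) ^ i) = (\<lambda>i. 2 / 3 ^ Suc (i + n) :: real)"
      by (rule ext) (simp add: power_add field_simps)
    ultimately show ?thesis by (simp add: field_simps)
  qed
  have "0 \<le> x - sum f {..<n}"
    by (rule sums_le[OF _ sums_zero tail]) (simp add: f_def)
  moreover have "x - sum f {..<n} \<le> 1 / 3 ^ n"
  proof (rule sums_le[OF _ tail geom])
    fix i
    have "real (a (i + n)) \<le> 2" using a[rule_format, of "i + n"] by auto
    thus "f (i + n) \<le> 2 / 3 ^ Suc (i + n)" unfolding f_def by (simp add: divide_right_mono)
  qed
  moreover have "set xs \<subseteq> {0, 2}" unfolding xs_def set_map using a by (simp add: image_subset_iff)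
  moreover have "length xs = n" by (simp add: xs_def)
  ultimately show ?thesis using that sum_xs by simp
qed

lemma S_denom_pos: "(p, q) \<in> S n \<Longrightarrow> q > 0"
  unfolding S_def by (auto intro: order.strict_trans2[of 0 "3 ^ (n - 1)"])

lemma S_num_le_denom: "(p, q) \<in> S n \<Longrightarrow> p \<le> q"
proof -
  assume pq: "(p, q) \<in> S n"
  have "real p / real q \<le> 1" using pq by (simp add: S_def cantor_set_def)
  thus "p \<le> q" using S_denom_pos[OF pq] by (simp add: divide_le_eq)
qed

lemma finite_S: "finite (S n)"
proof (rule finite_subset)
  show "S n \<subseteq> {..3 ^ n} \<times> {..3 ^ n}"
  proof (rule subrelI)
    fix p q assume pq: "(p, q) \<in> S n"
    thus "(p, q) \<in> {..3 ^ n} \<times> {..3 ^ n}" using S_num_le_denom[OF pq] by (auto simp: S_def)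
  qed
qed simp

text \<open>For a fixed denominator q < 3^n, the points p/q \<in> C are 1/q > 3^(-n) apart,
  so each of the 2^n digit prefixes of length n accounts for at most one of them.\<close>
lemma card_S_fixed_denom: "card {p. (p, q) \<in> S n} \<le> 2 ^ n"
proof -
  define A where "A = {p. (p, q) \<in> S n}"
  define digits where "digits = {xs. set xs \<subseteq> {0, 2::nat} \<and> length xs = n}"
  define val where "val xs = (\<Sum>i<n. real (xs ! i) / 3 ^ Suc i)" for xs :: "nat list"
  define near where "near p xs \<longleftrightarrow> xs \<in> digits \<and> val xs \<le> real p / real q
                       \<and> real p / real q \<le> val xs + 1 / 3 ^ n" for p xs
  have "\<exists>xs. near p xs" if "p \<in> A" for p
  proof -
    have "real p / real q \<in> cantor_set" using that by (simp add: A_def S_def)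
    from cantor_set_prefix[OF this, of n] show ?thesis
      unfolding near_def digits_def val_def by blast
  qed
  then obtain pre where pre: "\<And>p. p \<in> A \<Longrightarrow> near p (pre p)" by metis
  have "inj_on pre A"
  proof (rule inj_onI)
    fix p p' assume p: "p \<in> A" and p': "p' \<in> A" and eq: "pre p = pre p'"
    have q: "0 < q" "q < 3 ^ n" using p S_denom_pos by (auto simp: A_def S_def)
    have "val (pre p) \<le> real p / real q" "real p / real q \<le> val (pre p) + 1 / 3 ^ n"
      "val (pre p) \<le> real p' / real q" "real p' / real q \<le> val (pre p) + 1 / 3 ^ n"
      using pre[OF p] pre[OF p'] eq unfolding near_def by auto
    hence "\<bar>real p / real q - real p' / real q\<bar> \<le> 1 / 3 ^ n"
      unfolding abs_le_iff by (intro conjI; linarith)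
    hence "\<bar>real p - real p'\<bar> \<le> real q / 3 ^ n"
      using q by (simp add: diff_divide_distrib[symmetric] field_simps)
    also have "\<dots> < 1" using q by (simp add: divide_less_eq)
    finally show "p = p'" by linarith
  qed
  moreover have "pre ` A \<subseteq> digits" using pre unfolding near_def by auto
  moreover have "finite digits" unfolding digits_def by (rule finite_lists_length_eq) simp
  ultimately have "card A \<le> card digits" by (rule card_inj_on_le)
  also have "card digits = 2 ^ n" by (simp add: digits_def card_lists_length_eq numeral_2_eq_2)
  finally show ?thesis unfolding A_def .
qed

text \<open>Elements of S_K have period at most K log q < |K| n log 3; we cap the
  periods occurring at level n by this integer.\<close>
definition period_cap :: "real \<Rightarrow> nat \<Rightarrow> nat" where
  "period_cap K n = nat \<lfloor>\<bar>K\<bar> * ln 3 * real n\<rfloor>"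

lemma SK_denom_dvd:
  assumes "(p, q) \<in> SK K n"
  shows "\<exists>P\<in>{1..period_cap K n}. q dvd 3 ^ n * (3 ^ P - 1)"
proof -
  have S: "(p, q) \<in> S n" and P_le: "real (tperiod (real p / real q)) \<le> K * ln (real q)"
    using assms by (auto simp: SK_def)
  have q: "q > 0" using S by (rule S_denom_pos)
  have cop: "coprime p q" and qn: "q < 3 ^ n" using S by (auto simp: S_def)
  define P where "P = tperiod (real p / real q)"
  have "real q < 3 ^ n" using qn by (metis of_nat_less_iff of_nat_numeral of_nat_power)
  hence "ln (real q) < ln (3 ^ n)" using q by simp
  hence ln_q: "ln (real q) < real n * ln 3" by (simp add: ln_realpow)
  have "ln (real q) \<ge> 0" using q by simp
  hence "real P \<le> \<bar>K\<bar> * ln (real q)"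
    using P_le unfolding P_def by (meson abs_ge_self mult_right_mono order_trans)
  also have "\<dots> \<le> \<bar>K\<bar> * ln 3 * real n" using ln_q by (simp add: mult_left_mono mult_ac)
  finally have "P \<le> period_cap K n" unfolding period_cap_def by linarith
  moreover have "P \<ge> 1" using tperiod_spec(1)[OF q] unfolding P_def by (simp add: Suc_le_eq)
  ultimately show ?thesis using denom_dvd_period_number[OF q cop qn] unfolding P_def by auto
qed

text \<open>Counting S_K by denominators: at most 2^n numerators per denominator
  (card_S_fixed_denom), and the denominators are divisors of the numbers above.\<close>
lemma card_SK_le:
  "card (SK K n) \<le> (\<Sum>P\<in>{1..period_cap K n}. card {d::nat. d dvd 3 ^ n * (3 ^ P - 1)}) * 2 ^ n"
proof -
  define Q where "Q = (\<Union>P\<in>{1..period_cap K n}. {d. d dvd 3 ^ n * (3 ^ P - 1::nat)})"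
  have "0 < 3 ^ n * (3 ^ P - 1::nat)" if "P \<ge> 1" for P
    using that one_less_power[of "3::nat" P] by simp
  hence finQ: "finite Q" unfolding Q_def by (auto intro: finite_divisors_nat)
  have finB: "finite {p. (p, q) \<in> S n}" for q
    by (rule finite_subset[of _ "{..q}"]) (auto dest: S_num_le_denom)
  have "SK K n \<subseteq> (\<lambda>(q, p). (p, q)) ` (SIGMA q:Q. {p. (p, q) \<in> S n})"
  proof (rule subrelI)
    fix p q assume pq: "(p, q) \<in> SK K n"
    hence "q \<in> Q" "(p, q) \<in> S n" using SK_denom_dvd[OF pq] by (auto simp: Q_def SK_def)
    thus "(p, q) \<in> (\<lambda>(q, p). (p, q)) ` (SIGMA q:Q. {p. (p, q) \<in> S n})"
      by (auto intro: image_eqI[of _ _ "(q, p)"])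
  qed
  moreover have fin: "finite (SIGMA q:Q. {p. (p, q) \<in> S n})" using finQ finB by auto
  ultimately have "card (SK K n) \<le> card (SIGMA q:Q. {p. (p, q) \<in> S n})"
    by (meson card_image_le card_mono finite_imageI order_trans)
  also have "\<dots> = (\<Sum>q\<in>Q. card {p. (p, q) \<in> S n})" using finQ finB by simp
  also have "\<dots> \<le> (\<Sum>q\<in>Q. 2 ^ n)" by (intro sum_mono card_S_fixed_denom)
  also have "\<dots> = card Q * 2 ^ n" by simp
  also have "\<dots> \<le> (\<Sum>P\<in>{1..period_cap K n}. card {d::nat. d dvd 3 ^ n * (3 ^ P - 1)}) * 2 ^ n"
    unfolding Q_def by (intro mult_right_mono card_UN_le) auto
  finally show ?thesis .
qed

lemma card_divisors_period_number:
  fixes \<delta> L C0 :: real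
  assumes \<delta>: "\<delta> > 0" and C0_pos: "C0 \<ge> 0"
    and C0: "\<And>N. N > 0 \<Longrightarrow> real (card {d. d dvd N}) \<le> C0 * real N powr \<delta>"
    and P: "P \<ge> 1" "real P \<le> L * real n"
  shows "real (card {d::nat. d dvd 3 ^ n * (3 ^ P - 1)}) \<le> C0 * 3 powr ((1 + L) * real n * \<delta>)"
proof -
  define X :: nat where "X = 3 ^ n * (3 ^ P - 1)"
  have X: "0 < X" "X < 3 ^ (n + P)"
    using P(1) one_less_power[of "3::nat" P] by (auto simp: X_def power_add)
  have "real X < 3 ^ (n + P)" using X(2) by (metis of_nat_less_iff of_nat_numeral of_nat_power)
  hence "real X powr \<delta> \<le> (3 ^ (n + P)) powr \<delta>" using \<delta> by (intro powr_mono2) auto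
  also have "\<dots> = 3 powr (real (n + P) * \<delta>)"
    by (subst powr_realpow[symmetric]) (simp_all add: powr_powr)
  also have "\<dots> \<le> 3 powr ((1 + L) * real n * \<delta>)"
    using P(2) \<delta> by (intro powr_mono mult_right_mono) (auto simp: algebra_simps)
  finally have "C0 * real X powr \<delta> \<le> C0 * 3 powr ((1 + L) * real n * \<delta>)"
    using C0_pos by (rule mult_left_mono)
  thus ?thesis using C0[OF X(1)] unfolding X_def by linarith
qed

lemma card_SK_bigo:
  fixes K \<epsilon> :: real
  assumes \<epsilon>: "\<epsilon> > 0"
  shows "(\<lambda>n. real (card (SK K n))) \<in> O(\<lambda>n. 2 powr (real n * (1 + \<epsilon>)))"
proof -
  define L where "L = \<bar>K\<bar> * ln 3"
  define \<delta> where "\<delta> = \<epsilon> * ln 2 / (2 * (1 + L) * ln 3)"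
  have L: "L \<ge> 0" by (simp add: L_def)
  hence \<delta>: "\<delta> > 0" using \<epsilon> by (simp add: \<delta>_def)
  obtain C0 where C0: "C0 > 0" "\<And>N. N > 0 \<Longrightarrow> real (card {d. d dvd N}) \<le> C0 * real N powr \<delta>"
    using divisor_bound[OF \<delta>] by blast
  have exponent: "3 powr ((1 + L) * real n * \<delta>) = 2 powr (real n * (\<epsilon> / 2))" for n
  proof -
    have "2 * (1 + L) * ln 3 \<noteq> 0" using L by simp
    hence key: "\<delta> * (2 * (1 + L) * ln 3) = \<epsilon> * ln 2" unfolding \<delta>_def by simp
    have "(1 + L) * real n * \<delta> * ln 3 = real n / 2 * (\<delta> * (2 * (1 + L) * ln 3))"
      by (simp add: algebra_simps)
    also have "\<dots> = real n * (\<epsilon> / 2) * ln 2" unfolding key by (simp add: algebra_simps)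
    finally show ?thesis by (simp add: powr_def)
  qed
  have pointwise: "real (card (SK K n)) \<le> L * C0 * (real n * 2 powr (real n * (1 + \<epsilon> / 2)))" for n
  proof -
    define E where "E = (2::real) powr (real n * (\<epsilon> / 2))"
    have cap: "real (period_cap K n) \<le> L * real n"
      using L unfolding period_cap_def L_def by (simp add: mult_nonneg_nonneg)
    have "real (card {d::nat. d dvd 3 ^ n * (3 ^ P - 1)}) \<le> C0 * E" if "P \<in> {1..period_cap K n}" for P
    proof -
      have "P \<ge> 1" "real P \<le> L * real n" using that cap by auto
      hence "real (card {d::nat. d dvd 3 ^ n * (3 ^ P - 1)}) \<le> C0 * 3 powr ((1 + L) * real n * \<delta>)"
        using C0 by (intro card_divisors_period_number[OF \<delta>]) auto
      thus ?thesis unfolding E_def exponent .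
    qed
    hence "real (\<Sum>P\<in>{1..period_cap K n}. card {d::nat. d dvd 3 ^ n * (3 ^ P - 1)})
            \<le> of_nat (card {1..period_cap K n}) * (C0 * E)"
      unfolding of_nat_sum by (rule sum_bounded_above)
    also have "\<dots> = real (period_cap K n) * (C0 * E)" by simp
    also have "\<dots> \<le> L * real n * (C0 * E)"
      using cap C0(1) by (intro mult_right_mono) (auto simp: E_def)
    finally have sum_le: "real (\<Sum>P\<in>{1..period_cap K n}. card {d::nat. d dvd 3 ^ n * (3 ^ P - 1)})
                          \<le> L * real n * (C0 * E)" .
    have "real (card (SK K n))
           \<le> real ((\<Sum>P\<in>{1..period_cap K n}. card {d::nat. d dvd 3 ^ n * (3 ^ P - 1)}) * 2 ^ n)"
      by (rule of_nat_mono[OF card_SK_le])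
    also have "\<dots> = real (\<Sum>P\<in>{1..period_cap K n}. card {d::nat. d dvd 3 ^ n * (3 ^ P - 1)}) * 2 ^ n"
      by simp
    also have "\<dots> \<le> L * real n * (C0 * E) * 2 ^ n"
      using sum_le by (intro mult_right_mono) auto
    also have "\<dots> = L * C0 * (real n * (E * 2 powr real n))"
      by (simp add: powr_realpow mult_ac)
    also have "E * 2 powr real n = 2 powr (real n * (1 + \<epsilon> / 2))"
      unfolding E_def powr_add[symmetric] by (simp add: algebra_simps)
    finally show ?thesis .
  qed
  have "(\<lambda>n. real (card (SK K n))) \<in> O(\<lambda>n. real n * 2 powr (real n * (1 + \<epsilon> / 2)))"
    using pointwise by (intro bigoI[where c = "L * C0"] always_eventually allI) simp
  moreover have "(\<lambda>n. real n * 2 powr (real n * (1 + \<epsilon> / 2))) \<in> O(\<lambda>n. 2 powr (real n * (1 + \<epsilon>)))"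
    using \<epsilon> by real_asymp
  ultimately show ?thesis by (rule landau_o.big_trans)
qed

lemma card_S_split: "card (S n) = card (S n - SK K n) + card (SK K n)"
proof -
  have sub: "SK K n \<subseteq> S n" by (auto simp: SK_def)
  hence "finite (SK K n)" using finite_S by (rule finite_subset)
  thus ?thesis using sub card_mono[OF finite_S sub] by (simp add: card_Diff_subset)
qed

theorem corollary5p3:
  assumes "\<exists>K::real. \<forall>\<epsilon>1>0.
     (\<lambda>n. real (card (S n - SK K n))) \<in> O(\<lambda>n. 2 powr (real n * (1 + \<epsilon>1)))"
  shows "\<forall>\<epsilon>1>0. (\<lambda>n. real (card (S n))) \<in> O(\<lambda>n. 2 powr (real n * (1 + \<epsilon>1)))"
proof (intro allI impI)
  fix \<epsilon> :: real assume \<epsilon>: "\<epsilon> > 0"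
  from assms obtain K :: real where
    rest: "(\<lambda>n. real (card (S n - SK K n))) \<in> O(\<lambda>n. 2 powr (real n * (1 + \<epsilon>)))"
    using \<epsilon> by blast
  have "(\<lambda>n. real (card (S n))) = (\<lambda>n. real (card (S n - SK K n)) + real (card (SK K n)))"
    by (simp add: card_S_split[of _ K])
  with sum_in_bigo(1)[OF rest card_SK_bigo[OF \<epsilon>]]
  show "(\<lambda>n. real (card (S n))) \<in> O(\<lambda>n. 2 powr (real n * (1 + \<epsilon>)))" by simp
qed

end
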